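(* Let $p$ be a prime, $0\le a,b<p$ integers and $h(x)=(ax+b)\bmod p$. Given integers $i_2>i_1>0$, let $I=\{i_1,\dots,i_2\}$. Then $\operatorname{argmin}_{x\in I}h(x)$ can be computed in time $O(\log|I|)$.
   Context: Model of computation: Word RAM with word size at least $\log p$. $\operatorname{argmin}_{x\in I}h(x)$ denotes the smallest $y\in I$ with $h(y)=\min_{x\in I}h(x)$. *)

theory Defs
  imports Complex_Main "HOL-Computational_Algebra.Primes"
begin

text \<open>A minimal unit-cost word RAM. Memory is a map from integer addresses to
  integer words. Operands are direct addresses; Load/Store give indirect addressing.\<close>

datatype instr =
    Const int int
  | Add int int int
  | Sub int int int
  | Mul int int int
  | Div int int int          (* floor division; division by 0 yields 0 *)
  | Mod int int int
  | Load int int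
  | Store int int
  | Jlt int int nat
  | Jmp nat
  | Halt

type_synonym config = "nat \<times> (int \<Rightarrow> int)"

definition halted :: "instr list \<Rightarrow> config \<Rightarrow> bool" where
  "halted P c \<longleftrightarrow> fst c \<ge> length P \<or> P ! fst c = Halt"

fun exec :: "instr \<Rightarrow> config \<Rightarrow> config" where
  "exec (Const d k) (pc, m) = (Suc pc, m(d := k))"
| "exec (Add d s t) (pc, m) = (Suc pc, m(d := m s + m t))"
| "exec (Sub d s t) (pc, m) = (Suc pc, m(d := m s - m t))"
| "exec (Mul d s t) (pc, m) = (Suc pc, m(d := m s * m t))"
| "exec (Div d s t) (pc, m) = (Suc pc, m(d := m s div m t))"
| "exec (Mod d s t) (pc, m) = (Suc pc, m(d := m s mod m t))"
| "exec (Load d s) (pc, m) = (Suc pc, m(d := m (m s)))"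
| "exec (Store d s) (pc, m) = (Suc pc, m(m d := m s))"
| "exec (Jlt s t j) (pc, m) = (if m s < m t then j else Suc pc, m)"
| "exec (Jmp j) (pc, m) = (j, m)"
| "exec Halt c = c"

definition step :: "instr list \<Rightarrow> config \<Rightarrow> config" where
  "step P c = (if halted P c then c else exec (P ! fst c) c)"

definition run :: "instr list \<Rightarrow> nat \<Rightarrow> config \<Rightarrow> config" where
  "run P n c = (step P ^^ n) c"

definition init :: "int list \<Rightarrow> config" where
  "init xs = (0, \<lambda>i. if 0 \<le> i \<and> nat i < length xs then xs ! nat i else 0)"

definition hmod :: "int \<Rightarrow> int \<Rightarrow> int \<Rightarrow> int \<Rightarrow> int" where
  "hmod p a b x = (a * x + b) mod p"

definition argmin_on :: "(int \<Rightarrow> int) \<Rightarrow> int set \<Rightarrow> int" where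
  "argmin_on h I = (LEAST y. y \<in> I \<and> (\<forall>x\<in>I. h y \<le> h x))"

end

theory Submission
  imports Defs
begin

text \<open>Minimising \<open>(a x + b) mod p\<close> over an interval is reduced, Euclid-style, to a problem with a
  smaller modulus. Shift the interval to \<open>0 \<le> z \<le> N\<close> and, if necessary, reflect \<open>z \<mapsto> N - z\<close>
  so that the slope \<open>A\<close> satisfies \<open>2 A \<le> m\<close>. As \<open>z\<close> runs through \<open>0..N\<close>, \<open>A z + c\<close> passes
  \<open>K = (A N + c) div m\<close> multiples of \<open>m\<close>; between two of them the value grows, so a minimiser is
  either \<open>0\<close> or the first point after the \<open>k\<close>-th wrap, whose value is \<open>(c - k m) mod A\<close>.
  Minimising this over \<open>1 \<le> k \<le> K\<close> is the same kind of problem with modulus \<open>A\<close> and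
  \<open>2 K \<le> N + 1\<close>, so the recursion has depth \<open>O(log N)\<close>. A word-RAM program runs this recursion
  with an explicit stack, keeping every cell below \<open>(p + i2)\<^sup>4\<close>. Finally, as \<open>p\<close> is prime,
  \<open>x \<mapsto> (a x + b) mod p\<close> is injective on windows shorter than \<open>p\<close>, so the minimiser found is the
  smallest one.\<close>

section \<open>Minimising an affine function modulo m\<close>

definition is_minimizer :: "int \<Rightarrow> int \<Rightarrow> int \<Rightarrow> int \<Rightarrow> int \<Rightarrow> bool" where
  "is_minimizer m A c N y \<longleftrightarrow>
     0 \<le> y \<and> y \<le> N \<and> (\<forall>z. 0 \<le> z \<and> z \<le> N \<longrightarrow> hmod m A c y \<le> hmod m A c z)"

lemma pos_div_mult_le:
  fixes x m :: int
  assumes "0 < m"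
  shows "x div m * m \<le> x"
  using div_mult_mod_eq[of x m] pos_mod_sign[OF assms, of x] by linarith

lemma hmod_reflect: "hmod m (m - A) ((A * N + c) mod m) x = hmod m A c (N - x)"
proof -
  have "hmod m (m - A) ((A * N + c) mod m) x = ((m - A) * x + (A * N + c)) mod m"
    unfolding hmod_def by (simp add: mod_add_right_eq)
  also have "(m - A) * x + (A * N + c) = (A * (N - x) + c) + x * m"
    by (simp add: algebra_simps)
  finally show ?thesis unfolding hmod_def by simp
qed

lemma is_minimizer_reflect:
  assumes "is_minimizer m (m - A) ((A * N + c) mod m) N y"
  shows "is_minimizer m A c N (N - y)"
proof -
  have "hmod m A c (N - y) \<le> hmod m A c z" if "0 \<le> z" "z \<le> N" for z
  proof -
    have "\<forall>z. 0 \<le> z \<and> z \<le> N \<longrightarrow> hmod m A c (N - y) \<le> hmod m A c (N - z)"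
      using assms unfolding is_minimizer_def hmod_reflect by simp
    from this[rule_format, of "N - z"] that show ?thesis by simp
  qed
  then show ?thesis using assms unfolding is_minimizer_def by auto
qed

lemma is_minimizer_no_wrap:
  assumes "0 \<le> A" "0 \<le> c" "0 \<le> N" "(A * N + c) div m = 0" "0 < m"
  shows "is_minimizer m A c N 0"
proof -
  have "(A * N + c) mod m = A * N + c"
    using assms div_mult_mod_eq[of "A * N + c" m] by simp
  then have "A * N + c < m"
    using pos_mod_bound[OF \<open>0 < m\<close>, of "A * N + c"] by linarith
  moreover have "hmod m A c z = A * z + c" if "0 \<le> z" "z \<le> N" for z
  proof -
    have "A * z \<le> A * N" using that assms by (simp add: mult_left_mono)
    then show ?thesis unfolding hmod_def using that assms \<open>A * N + c < m\<close> by simp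
  qed
  ultimately show ?thesis using assms unfolding is_minimizer_def by auto
qed

text \<open>\<open>wrap_point m A c k\<close> is \<open>\<lceil>(k m - c) / A\<rceil>\<close>, the least \<open>z\<close> with \<open>A z + c \<ge> k m\<close>.\<close>

definition wrap_point :: "int \<Rightarrow> int \<Rightarrow> int \<Rightarrow> int \<Rightarrow> int" where
  "wrap_point m A c k = (k * m - c + A - 1) div A"

lemma wrap_point_bounds:
  assumes "0 < A" "0 < k * m - c"
  shows "k * m - c \<le> A * wrap_point m A c k" "A * wrap_point m A c k < k * m - c + A"
    and "0 \<le> wrap_point m A c k"
proof -
  have "k * m - c + A - 1 = A * wrap_point m A c k + (k * m - c + A - 1) mod A"
    unfolding wrap_point_def by simp
  moreover have "0 \<le> (k * m - c + A - 1) mod A" "(k * m - c + A - 1) mod A < A"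
    using assms by auto
  ultimately show "k * m - c \<le> A * wrap_point m A c k" "A * wrap_point m A c k < k * m - c + A"
    by linarith+
  show "0 \<le> wrap_point m A c k"
    unfolding wrap_point_def using assms by (simp add: pos_imp_zdiv_nonneg_iff)
qed

lemma wrap_point_le:
  assumes "0 < A" "0 < k * m - c" "k * m \<le> A * z + c"
  shows "wrap_point m A c k \<le> z"
proof -
  have "A * wrap_point m A c k < A * (z + 1)"
    using wrap_point_bounds(2)[OF assms(1,2)] assms(3) by (simp add: algebra_simps)
  then show ?thesis using assms(1) by (simp add: mult_less_cancel_left)
qed

lemma wrap_threshold_pos:
  fixes m c k :: int
  assumes "0 \<le> c" "c < m" "1 \<le> k"
  shows "0 < k * m - c"
proof -
  have "0 < m" using assms by linarith
  then have "1 * m \<le> k * m" using assms(3) by (intro mult_right_mono) auto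
  then show ?thesis using assms by linarith
qed

lemma wrap_point_range:
  fixes m A c N k :: int
  assumes "0 < A" "0 \<le> c" "c < m" "1 \<le> k" "k \<le> (A * N + c) div m"
  shows "0 \<le> wrap_point m A c k" "wrap_point m A c k \<le> N"
proof -
  have pos: "0 < k * m - c" using wrap_threshold_pos[OF assms(2-4)] .
  then show "0 \<le> wrap_point m A c k" using wrap_point_bounds(3)[OF assms(1)] by simp
  have "0 < m" using assms by linarith
  have "k * m \<le> (A * N + c) div m * m" using assms(5) \<open>0 < m\<close> by simp
  also have "\<dots> \<le> A * N + c" using pos_div_mult_le[OF \<open>0 < m\<close>] .
  finally show "wrap_point m A c k \<le> N" by (rule wrap_point_le[OF assms(1) pos])
qed

lemma hmod_wrap_point:
  assumes "0 < A" "A \<le> m" "0 < k * m - c"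
  shows "hmod m A c (wrap_point m A c k) = A * wrap_point m A c k + c - k * m"
    and "hmod m A c (wrap_point m A c k) = (c - k * m) mod A"
proof -
  let ?y = "wrap_point m A c k"
  have bounds: "0 \<le> A * ?y + c - k * m" "A * ?y + c - k * m < A"
    using wrap_point_bounds[OF assms(1,3)] by auto
  have "hmod m A c ?y = (A * ?y + c - k * m) mod m"
    unfolding hmod_def using mod_mult_self1[of "A * ?y + c - k * m" k m] by simp
  also have "\<dots> = A * ?y + c - k * m"
    using bounds assms(2) by (simp add: mod_pos_pos_trivial)
  finally show eq: "hmod m A c ?y = A * ?y + c - k * m" .
  have "(c - k * m) mod A = (A * ?y + c - k * m) mod A"
    by (metis add_diff_eq mod_mult_self4)
  also have "\<dots> = A * ?y + c - k * m"
    using bounds by (simp add: mod_pos_pos_trivial)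
  finally show "hmod m A c ?y = (c - k * m) mod A" using eq by simp
qed

lemma hmod_descend:
  "hmod A ((- m) mod A) ((c - m) mod A) j = (c - (j + 1) * m) mod A"
proof -
  have "hmod A ((- m) mod A) ((c - m) mod A) j = ((- m) * j + (c - m)) mod A"
    unfolding hmod_def by (metis mod_add_cong mod_mod_trivial mod_mult_left_eq)
  also have "(- m) * j + (c - m) = c - (j + 1) * m"
    by (simp add: algebra_simps)
  finally show ?thesis .
qed

text \<open>Between two wraps \<open>(A z + c) mod m\<close> grows, so every point is dominated by the last wrap
  point before it.\<close>

lemma hmod_wrap_point_le:
  assumes "0 < A" "A \<le> m" "0 \<le> c" "c < m" "0 \<le> z" "1 \<le> (A * z + c) div m"
  shows "hmod m A c (wrap_point m A c ((A * z + c) div m)) \<le> hmod m A c z"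
proof -
  define k where "k = (A * z + c) div m"
  have pos: "0 < k * m - c" using wrap_threshold_pos assms unfolding k_def by blast
  have "0 < m" using assms by linarith
  have "wrap_point m A c k \<le> z"
    using wrap_point_le[OF assms(1) pos] pos_div_mult_le[OF \<open>0 < m\<close>, of "A * z + c"]
    unfolding k_def by blast
  then have "A * wrap_point m A c k \<le> A * z" using assms(1) by simp
  moreover have "hmod m A c z = A * z + c - k * m"
    unfolding hmod_def k_def by (simp add: minus_div_mult_eq_mod[symmetric])
  ultimately show ?thesis
    using hmod_wrap_point(1)[OF assms(1,2) pos] unfolding k_def by simp
qed

definition lift_minimizer :: "int \<Rightarrow> int \<Rightarrow> int \<Rightarrow> int \<Rightarrow> int" where
  "lift_minimizer m A c j =
     (let y = wrap_point m A c (j + 1) in if hmod m A c y < c then y else 0)"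

lemma is_minimizer_lift:
  assumes "0 < A" "A \<le> m" "0 \<le> c" "c < m" "0 \<le> N"
    and j: "is_minimizer A ((- m) mod A) ((c - m) mod A) ((A * N + c) div m - 1) j"
  shows "is_minimizer m A c N (lift_minimizer m A c j)"
proof -
  define K where "K = (A * N + c) div m"
  define g where "g = hmod A ((- m) mod A) ((c - m) mod A)"
  have j_range: "0 \<le> j" "j \<le> K - 1" and j_min: "\<And>i. 0 \<le> i \<Longrightarrow> i \<le> K - 1 \<Longrightarrow> g j \<le> g i"
    using j unfolding is_minimizer_def g_def K_def by auto
  have wrap_pos: "0 < k * m - c" if "1 \<le> k" for k
    using wrap_threshold_pos[OF \<open>0 \<le> c\<close> \<open>c < m\<close> that] .
  have hmod_wrap: "hmod m A c (wrap_point m A c k) = g (k - 1)" if "1 \<le> k" for k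
    using hmod_wrap_point(2)[OF assms(1,2) wrap_pos[OF that]] unfolding g_def hmod_descend
    by simp
  define y where "y = wrap_point m A c (j + 1)"
  have y_range: "0 \<le> y" "y \<le> N"
    using wrap_point_range[OF assms(1,3,4), of "j + 1" N] j_range unfolding y_def K_def by auto
  have lower_bound: "min c (g j) \<le> hmod m A c z" if "0 \<le> z" "z \<le> N" for z
  proof (cases "(A * z + c) div m = 0")
    case True
    have "0 \<le> A * z" using that assms by simp
    then show ?thesis using True by (simp add: hmod_def minus_div_mult_eq_mod[symmetric])
  next
    case False
    define k where "k = (A * z + c) div m"
    have "0 \<le> k" unfolding k_def using that assms by (simp add: pos_imp_zdiv_nonneg_iff)
    with False have "1 \<le> k" unfolding k_def by simp
    moreover have "k \<le> K" unfolding k_def K_def using that assms by (simp add: zdiv_mono1 mult_left_mono)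
    ultimately have "g j \<le> g (k - 1)" using j_min by simp
    also have "g (k - 1) \<le> hmod m A c z"
      using hmod_wrap[OF \<open>1 \<le> k\<close>] hmod_wrap_point_le[OF assms(1-4) that(1) \<open>1 \<le> k\<close>[unfolded k_def]]
      unfolding k_def by simp
    finally show ?thesis by simp
  qed
  have "hmod m A c y = g j" using hmod_wrap[of "j + 1"] j_range unfolding y_def by simp
  moreover have "hmod m A c 0 = c" unfolding hmod_def using assms by simp
  ultimately show ?thesis
    using y_range lower_bound \<open>0 \<le> N\<close>
    unfolding is_minimizer_def lift_minimizer_def y_def[symmetric] Let_def
    by (auto simp: min_def)
qed

lemma slope_nonzero_if_wraps:
  fixes m A c N :: int
  assumes "0 \<le> c" "c < m" "1 \<le> (A * N + c) div m"
  shows "A \<noteq> 0"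
proof
  assume "A = 0"
  with assms show False by (simp add: div_pos_pos_trivial)
qed

lemma wrap_count_halves:
  fixes m A c N :: int
  assumes "0 < m" "2 * A \<le> m" "0 \<le> A" "c < m" "0 \<le> N"
  shows "2 * ((A * N + c) div m) \<le> N + 1"
proof -
  define K where "K = (A * N + c) div m"
  have "K * m \<le> A * N + c" unfolding K_def using pos_div_mult_le[OF assms(1)] .
  moreover have "2 * A * N \<le> m * N" using assms by (simp add: mult_right_mono)
  ultimately have "m * (2 * K) < m * (N + 2)" using assms by (simp add: algebra_simps)
  then show ?thesis unfolding K_def using assms(1) by (simp add: mult_less_cancel_left)
qed

text \<open>Substituting \<open>z \<mapsto> N - z\<close> replaces the slope \<open>A\<close> by \<open>m - A\<close>; after this normalisation
  \<open>2 A \<le> m\<close>, which is what makes the number of wraps at most halve \<open>N\<close>.\<close>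

definition fold_slope :: "int \<Rightarrow> int \<Rightarrow> int \<Rightarrow> int \<Rightarrow> int \<times> int \<times> int" where
  "fold_slope m A c N = (if m < 2 * A then (m - A, (A * N + c) mod m, 1) else (A, c, 0))"

definition unfold_index :: "int \<Rightarrow> int \<Rightarrow> int \<Rightarrow> int" where
  "unfold_index r N y = (if 0 < r then N - y else y)"

lemma fold_slope_cases:
  assumes "fold_slope m A c N = (A', c', r)"
  obtains (reflected) "m < 2 * A" "A' = m - A" "c' = (A * N + c) mod m" "r = 1"
    | (plain) "\<not> m < 2 * A" "A' = A" "c' = c" "r = 0"
  using assms unfolding fold_slope_def by (cases "m < 2 * A") auto

lemma fold_slope_bounds:
  assumes "fold_slope m A c N = (A', c', r)" "0 \<le> A" "A < m" "0 \<le> c" "c < m"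
  shows "0 \<le> A'" "2 * A' \<le> m" "0 \<le> c'" "c' < m" "0 \<le> r" "r \<le> 1"
  using assms unfolding fold_slope_def by (auto split: if_splits)

lemma is_minimizer_fold_slope:
  assumes "fold_slope m A c N = (A', c', r)" "is_minimizer m A' c' N y"
  shows "is_minimizer m A c N (unfold_index r N y)"
  using assms is_minimizer_reflect unfolding fold_slope_def unfold_index_def
  by (auto split: if_splits)

lemma hmod_shift: "hmod p a b (i1 + z) = hmod p a ((a * i1 + b) mod p) z"
proof -
  have "(a * (i1 + z) + b) mod p = (a * z + (a * i1 + b)) mod p" by (simp add: algebra_simps)
  also have "\<dots> = (a * z + (a * i1 + b) mod p) mod p" by (simp add: mod_add_right_eq)
  finally show ?thesis unfolding hmod_def .
qed

lemma hmod_mod_arg: "hmod p a c (z mod p) = hmod p a c z"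
  unfolding hmod_def by (metis mod_add_left_eq mod_mult_right_eq)

lemma hmod_inj_window:
  assumes "prime p" "0 < a" "a < p" "hmod p a b x = hmod p a b y" "x \<le> y" "y - x < p"
  shows "x = y"
proof (rule ccontr)
  assume "x \<noteq> y"
  from assms(4) have "p dvd a * (y - x)"
    unfolding hmod_def by (metis mod_eq_dvd_iff right_diff_distrib add_diff_cancel_right)
  then have "p dvd a \<or> p dvd (y - x)" using assms(1) by (simp add: prime_dvd_mult_iff)
  moreover have "\<not> p dvd a" using assms(2,3) zdvd_imp_le by fastforce
  moreover have "\<not> p dvd (y - x)" using assms(5,6) \<open>x \<noteq> y\<close> zdvd_imp_le by fastforce
  ultimately show False by simp
qed

lemma argmin_on_hmod:
  fixes p a b i1 i2 y :: int
  assumes "prime p" "0 < a" "a < p" "i1 \<le> i2"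
    and y: "is_minimizer p a ((a * i1 + b) mod p) (min (i2 - i1) (p - 1)) y"
  shows "argmin_on (hmod p a b) {i1..i2} = i1 + y"
  unfolding argmin_on_def
proof (rule Least_equality)
  define c where "c = (a * i1 + b) mod p"
  have y_range: "0 \<le> y" "y \<le> i2 - i1" "y \<le> p - 1" using y unfolding is_minimizer_def by auto
  then have "i1 + y \<in> {i1..i2}" by auto
  have minimal: "hmod p a b (i1 + y) \<le> hmod p a b u" if "u \<in> {i1..i2}" for u
  proof -
    define z where "z = u - i1"
    have "0 \<le> z mod p" "z mod p \<le> z" "z mod p \<le> p - 1" "z \<le> i2 - i1"
      using that assms(2,3) unfolding z_def by (auto intro: zmod_le_nonneg_dividend)
    then have "hmod p a c y \<le> hmod p a c (z mod p)"
      using y unfolding is_minimizer_def c_def by auto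
    then show ?thesis
      using hmod_shift[of p a b i1 y] hmod_shift[of p a b i1 z]
      unfolding c_def[symmetric] hmod_mod_arg z_def by simp
  qed
  with \<open>i1 + y \<in> {i1..i2}\<close>
  show "i1 + y \<in> {i1..i2} \<and> (\<forall>x\<in>{i1..i2}. hmod p a b (i1 + y) \<le> hmod p a b x)"
    by blast
  fix u assume u: "u \<in> {i1..i2} \<and> (\<forall>x\<in>{i1..i2}. hmod p a b u \<le> hmod p a b x)"
  show "i1 + y \<le> u"
  proof (rule ccontr)
    assume "\<not> i1 + y \<le> u"
    moreover have "hmod p a b u = hmod p a b (i1 + y)"
      using u minimal \<open>i1 + y \<in> {i1..i2}\<close> by (meson order_antisym)
    ultimately show False
      using hmod_inj_window[OF assms(1-3), of b u "i1 + y"] u y_range by auto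
  qed
qed

lemma argmin_on_hmod_zero_slope:
  assumes "i1 \<le> i2"
  shows "argmin_on (hmod p 0 b) {i1..i2} = i1"
  unfolding argmin_on_def by (rule Least_equality) (use assms in \<open>auto simp: hmod_def\<close>)

section \<open>Bounded runs of the word RAM\<close>

definition bounded_by :: "int \<Rightarrow> (int \<Rightarrow> int) \<Rightarrow> bool" where
  "bounded_by B mem \<longleftrightarrow> (\<forall>x. \<bar>mem x\<bar> \<le> B)"

text \<open>An opaque wrapper: the simplifier would otherwise rewrite \<open>\<bar>v\<bar> \<le> B\<close> differently in the goal
  and in the supplied bound facts.\<close>

definition fits :: "int \<Rightarrow> int \<Rightarrow> bool" where
  "fits B v \<longleftrightarrow> \<bar>v\<bar> \<le> B"

lemma bounded_by_upd:
  "bounded_by B mem \<Longrightarrow> bounded_by B (mem(x := v)) \<longleftrightarrow> fits B v"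
  unfolding bounded_by_def fits_def by auto

definition reach :: "instr list \<Rightarrow> int \<Rightarrow> nat \<Rightarrow> config \<Rightarrow> (config \<Rightarrow> bool) \<Rightarrow> bool" where
  "reach P B k c Q \<longleftrightarrow> (\<exists>n\<le>k. (\<forall>t\<le>n. bounded_by B (snd (run P t c))) \<and> Q (run P n c))"

lemma run_Suc: "run P (Suc n) c = run P n (step P c)"
  unfolding run_def funpow_Suc_right by simp

lemma run_add: "run P (n1 + n2) c = run P n2 (run P n1 c)"
  unfolding run_def by (metis add.commute comp_apply funpow_add)

lemma run_0 [simp]: "run P 0 c = c"
  by (simp add: run_def)

lemma reach_step:
  assumes "bounded_by B (snd c)" "reach P B k (step P c) Q"
  shows "reach P B (Suc k) c Q"
proof -
  obtain n where n: "n \<le> k" "\<forall>t\<le>n. bounded_by B (snd (run P t (step P c)))"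
    "Q (run P n (step P c))"
    using assms(2) unfolding reach_def by blast
  have "bounded_by B (snd (run P t c))" if "t \<le> Suc n" for t
    using that n(2) assms(1) by (cases t) (simp_all add: run_Suc)
  then show ?thesis
    unfolding reach_def using n by (intro exI[of _ "Suc n"]) (simp add: run_Suc)
qed

lemma reach_trans:
  assumes "reach P B k1 c Q1" "\<And>c'. Q1 c' \<Longrightarrow> reach P B k2 c' Q2"
  shows "reach P B (k1 + k2) c Q2"
proof -
  obtain n1 where n1: "n1 \<le> k1" "\<forall>t\<le>n1. bounded_by B (snd (run P t c))" "Q1 (run P n1 c)"
    using assms(1) unfolding reach_def by blast
  obtain n2 where n2: "n2 \<le> k2" "\<forall>t\<le>n2. bounded_by B (snd (run P t (run P n1 c)))"
    "Q2 (run P n2 (run P n1 c))"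
    using assms(2)[OF n1(3)] unfolding reach_def by blast
  have "bounded_by B (snd (run P t c))" if "t \<le> n1 + n2" for t
  proof (cases "t \<le> n1")
    case False
    then have "run P t c = run P (t - n1) (run P n1 c)" "t - n1 \<le> n2"
      using that run_add[of P n1 "t - n1" c] by simp_all
    then show ?thesis using n2(2) by simp
  qed (use n1 in simp)
  then show ?thesis
    unfolding reach_def using n1 n2 by (intro exI[of _ "n1 + n2"]) (simp add: run_add)
qed

lemma reach_mono:
  "reach P B k c Q \<Longrightarrow> k \<le> k' \<Longrightarrow> (\<And>c'. Q c' \<Longrightarrow> Q' c') \<Longrightarrow> reach P B k' c Q'"
  unfolding reach_def by (blast intro: order_trans)

text \<open>Straight-line segments of the program are verified by letting the
  simplifier unfold it.\<close>

fun runs_to :: "instr list \<Rightarrow> int \<Rightarrow> nat \<Rightarrow> nat \<Rightarrow> ((int \<Rightarrow> int) \<Rightarrow> bool) \<Rightarrow> config \<Rightarrow> bool"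
where
  "runs_to P B 0 t R c \<longleftrightarrow> False"
| "runs_to P B (Suc k) t R c \<longleftrightarrow> bounded_by B (snd (step P c)) \<and>
     (if fst (step P c) = t then R (snd (step P c)) else runs_to P B k t R (step P c))"

lemma runs_to_numeral [simp]:
  "runs_to P B (numeral k) t R c \<longleftrightarrow> bounded_by B (snd (step P c)) \<and>
     (if fst (step P c) = t then R (snd (step P c)) else runs_to P B (pred_numeral k) t R (step P c))"
  by (simp add: numeral_eq_Suc)

lemma reach_if_runs_to:
  assumes "bounded_by B mem" "runs_to P B k t R (pc, mem)"
  shows "reach P B k (pc, mem) (\<lambda>s. fst s = t \<and> bounded_by B (snd s) \<and> R (snd s))"
  using assms
proof (induction k arbitrary: pc mem)
  case (Suc k)
  obtain pc' mem' where step: "step P (pc, mem) = (pc', mem')"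
    by (cases "step P (pc, mem)")
  with Suc.prems have bounded: "bounded_by B mem'" by simp
  show ?case
  proof (cases "pc' = t")
    case True
    then have "reach P B 0 (pc', mem') (\<lambda>s. fst s = t \<and> bounded_by B (snd s) \<and> R (snd s))"
      using Suc.prems bounded step by (simp add: reach_def)
    then have "reach P B (Suc 0) (pc, mem) (\<lambda>s. fst s = t \<and> bounded_by B (snd s) \<and> R (snd s))"
      using Suc.prems(1) step by (intro reach_step) simp_all
    then show ?thesis by (rule reach_mono) auto
  next
    case False
    then have "runs_to P B k t R (pc', mem')" using Suc.prems step by simp
    then have "reach P B k (pc', mem') (\<lambda>s. fst s = t \<and> bounded_by B (snd s) \<and> R (snd s))"
      using Suc.IH bounded by blast
    then show ?thesis
      using reach_step[of B "(pc, mem)" P k] Suc.prems(1) step by simp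
  qed
qed simp

lemma reach_seq:
  assumes "reach P B k1 c (\<lambda>s. fst s = t \<and> bounded_by B (snd s) \<and> R (snd s))"
    and "\<And>mem. bounded_by B mem \<Longrightarrow> R mem \<Longrightarrow> reach P B k2 (t, mem) Q"
  shows "reach P B (k1 + k2) c Q"
  using assms(1) by (rule reach_trans) (metis assms(2) prod.collapse)

text \<open>Memory layout: cells 0--4 hold the input \<open>p, a, b, i1, i2\<close> (cell 0 receives the output);
  cells 5--8 hold the current problem \<open>(m, A, c, N)\<close>, i.e. minimise \<open>(A z + c) mod m\<close> over
  \<open>0 \<le> z \<le> N\<close>; cell 9 is the stack pointer, 10 the reflection flag, 11 the number of wraps,
  12--13 are scratch cells, 14 holds the answer of the last solved problem, and 20, 21, 23, 24
  hold the constants 0, 1, 5, 100. The stack of pending problems starts at address 100, five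
  cells per frame. Program points: 17 loop head, 26 after folding, 35 push, 53 return,
  56 pop, 66 lift the answer, 55 and 7 halt. In the listing, the lines that are not indented
  further begin at the program points 0, 6, 8, 17, 26, 35, 53, 56, 66.\<close>

definition prog :: "instr list" where
  "prog = [
    Const 20 0, Const 21 1, Const 23 5, Const 24 100, Const 9 100, Jlt 20 1 8,
    Add 0 3 20, Halt,
    Mul 12 1 3, Add 12 12 2, Mod 7 12 0, Sub 8 4 3, Sub 13 0 21, Jlt 8 13 15, Mul 8 13 21,
      Mul 5 0 21, Mul 6 1 21,
    Add 12 6 6, Const 10 0, Jlt 5 12 21, Jmp 26, Const 10 1, Mul 12 6 8, Add 12 12 7,
      Mod 7 12 5, Sub 6 5 6,
    Mul 12 6 8, Add 12 12 7, Div 11 12 5, Jlt 20 11 35, Const 14 0, Jlt 20 10 33, Jmp 53,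
      Mul 14 8 21, Jmp 53,
    Store 9 5, Add 13 9 21, Store 13 6, Add 13 13 21, Store 13 7, Add 13 13 21, Store 13 8,
      Add 13 13 21, Store 13 10, Add 9 9 23, Sub 8 11 21, Sub 12 7 5, Mod 7 12 6, Sub 12 20 5,
      Mod 12 12 6, Mul 5 6 21, Mul 6 12 21, Jmp 17,
    Jlt 24 9 56, Add 0 14 3, Halt,
    Sub 9 9 23, Load 5 9, Add 13 9 21, Load 6 13, Add 13 13 21, Load 7 13, Add 13 13 21,
      Load 8 13, Add 13 13 21, Load 10 13,
    Add 12 14 21, Mul 12 12 5, Sub 12 12 7, Add 12 12 6, Sub 12 12 21, Div 14 12 6,
      Mul 12 6 14, Add 12 12 7, Mod 12 12 5, Jlt 12 7 77, Const 14 0, Jlt 20 10 79, Jmp 53,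
      Sub 14 8 14, Jmp 53]"

lemma length_prog [simp]: "length prog = 81"
  by (simp add: prog_def)

lemmas nth_prog [simp] = arg_cong[where f = "\<lambda>P. P ! n" for n, OF prog_def]

lemma step_prog [simp]:
  "step prog (pc, mem) =
     (if pc < length prog \<and> prog ! pc \<noteq> Halt then exec (prog ! pc) (pc, mem) else (pc, mem))"
  by (simp add: step_def halted_def)

type_synonym frame = "int \<times> int \<times> int \<times> int \<times> int"

fun frames_at :: "int \<Rightarrow> frame list \<Rightarrow> (int \<Rightarrow> int) \<Rightarrow> bool" where
  "frames_at s [] mem \<longleftrightarrow> True"
| "frames_at s ((m, A, c, N, r) # fs) mem \<longleftrightarrow>
     mem s = m \<and> mem (s + 1) = A \<and> mem (s + 2) = c \<and> mem (s + 3) = N \<and> mem (s + 4) = r \<and>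
     frames_at (s + 5) fs mem"

lemma frames_at_append [simp]:
  "frames_at s (fs @ gs) mem \<longleftrightarrow> frames_at s fs mem \<and> frames_at (s + 5 * int (length fs)) gs mem"
  by (induction s fs mem rule: frames_at.induct) (auto simp: algebra_simps)

lemma frames_at_upd [simp]:
  "x < s \<or> s + 5 * int (length fs) \<le> x \<Longrightarrow> frames_at s fs (mem(x := v)) \<longleftrightarrow> frames_at s fs mem"
  by (induction s fs mem rule: frames_at.induct) auto

definition ram_invariant :: "int \<Rightarrow> frame list \<Rightarrow> (int \<Rightarrow> int) \<Rightarrow> bool" where
  "ram_invariant i1 fs mem \<longleftrightarrow> mem 20 = 0 \<and> mem 21 = 1 \<and> mem 23 = 5 \<and> mem 24 = 100 \<and>
     mem 3 = i1 \<and> mem 9 = 100 + 5 * int (length fs) \<and> frames_at 100 fs mem"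

definition loop_state :: "int \<Rightarrow> frame list \<Rightarrow> int \<Rightarrow> int \<Rightarrow> int \<Rightarrow> int \<Rightarrow> (int \<Rightarrow> int) \<Rightarrow> bool"
where
  "loop_state i1 fs m A c N mem \<longleftrightarrow>
     ram_invariant i1 fs mem \<and> mem 5 = m \<and> mem 6 = A \<and> mem 7 = c \<and> mem 8 = N"

definition folded_state ::
  "int \<Rightarrow> frame list \<Rightarrow> int \<Rightarrow> int \<Rightarrow> int \<Rightarrow> int \<Rightarrow> int \<Rightarrow> (int \<Rightarrow> int) \<Rightarrow> bool"
where
  "folded_state i1 fs m A c N r mem \<longleftrightarrow> loop_state i1 fs m A c N mem \<and> mem 10 = r"

lemma square_bound_expand:
  fixes P B :: int
  assumes "(P + 11)\<^sup>2 \<le> B"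
  shows "P * P + 22 * P + 121 \<le> B" "0 \<le> P * P"
  using assms by (simp_all add: power2_eq_square algebra_simps)

lemma fold_block:
  assumes state: "loop_state i1 fs m A c N mem" "bounded_by B mem"
    and fold: "fold_slope m A c N = (A', c', r)"
    and ranges: "0 \<le> A" "A < m" "0 \<le> c" "c < m" "0 \<le> N" "m \<le> P" "N \<le> P"
    and B: "(P + 11)\<^sup>2 \<le> B"
  shows "runs_to prog B 10 26 (folded_state i1 fs m A' c' N r) (17, mem)"
proof -
  note B' = square_bound_expand[OF B]
  have "0 \<le> A * N" "A * N \<le> P * P" "0 \<le> (A * N + c) mod m" "(A * N + c) mod m < m"
    using ranges by (auto intro: mult_mono)
  then have bounds: "fits B (2 * A)" "fits B (A * N)" "fits B (A * N + c)"
    "fits B ((A * N + c) mod m)" "fits B (m - A)" "fits B 0" "fits B 1"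
    using ranges B' unfolding fits_def by (simp_all only: abs_le_iff) linarith+
  show ?thesis
    using state unfolding folded_state_def loop_state_def ram_invariant_def
    by (cases rule: fold_slope_cases[OF fold]; simp add: bounded_by_upd bounds split del: if_split)
qed

lemma base_block:
  assumes state: "folded_state i1 fs m A c N r mem" "bounded_by B mem"
    and no_wrap: "(A * N + c) div m = 0"
    and ranges: "0 \<le> A" "A \<le> P" "0 \<le> c" "c \<le> P" "0 \<le> N" "N \<le> P"
    and B: "(P + 11)\<^sup>2 \<le> B"
  shows "runs_to prog B 10 53
    (\<lambda>mem'. ram_invariant i1 fs mem' \<and> mem' 14 = unfold_index r N 0) (26, mem)"
proof -
  note B' = square_bound_expand[OF B]
  have "0 \<le> A * N" "A * N \<le> P * P"
    using ranges by (auto intro: mult_mono)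
  then have bounds: "fits B (A * N)" "fits B (A * N + c)" "fits B N" "fits B 0"
    using ranges B' unfolding fits_def by (simp_all only: abs_le_iff) linarith+
  show ?thesis
    using state no_wrap unfolding folded_state_def loop_state_def ram_invariant_def unfold_index_def
    by (simp add: bounded_by_upd bounds)
qed

lemma push_block:
  assumes state: "folded_state i1 fs m A c N r mem" "bounded_by B mem"
    and wraps: "1 \<le> (A * N + c) div m"
    and ranges: "0 \<le> A" "A \<le> P" "0 \<le> c" "c < m" "0 \<le> N" "N \<le> P" "m \<le> P"
      "0 \<le> r" "r \<le> 1" "int (length fs) \<le> P"
    and B: "(P + 11)\<^sup>2 \<le> B"
  shows "runs_to prog B 30 17
    (loop_state i1 (fs @ [(m, A, c, N, r)]) A ((- m) mod A) ((c - m) mod A) ((A * N + c) div m - 1))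
    (26, mem)"
proof -
  note B' = square_bound_expand[OF B]
  have "0 < A"
    using slope_nonzero_if_wraps[OF _ _ wraps] ranges by simp
  have "(A * N + c) div m \<le> A * N + c"
    using zdiv_mono2[of "A * N + c" 1 m] ranges by simp
  moreover have "0 \<le> A * N" "A * N \<le> P * P"
    "0 \<le> (c - m) mod A" "(c - m) mod A < A" "0 \<le> (- m) mod A" "(- m) mod A < A"
    using ranges \<open>0 < A\<close> by (auto intro: mult_mono)
  ultimately have bounds: "fits B (A * N)" "fits B (A * N + c)" "fits B ((A * N + c) div m)"
    "fits B ((A * N + c) div m - 1)" "fits B m" "fits B A" "fits B c"
    "fits B N" "fits B r" "fits B (c - m)" "fits B ((c - m) mod A)" "fits B (- m)"
    "fits B ((- m) mod A)" "fits B (101 + 5 * int (length fs))"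
    "fits B (102 + 5 * int (length fs))" "fits B (103 + 5 * int (length fs))"
    "fits B (104 + 5 * int (length fs))" "fits B (105 + 5 * int (length fs))"
    using ranges wraps B' unfolding fits_def by (simp_all only: abs_le_iff) linarith+
  have wraps': "0 < (A * N + c) div m" using wraps by simp
  show ?thesis
    using state unfolding folded_state_def loop_state_def ram_invariant_def
    by (simp add: bounded_by_upd bounds wraps' split del: if_split)
qed

lemma pop_block:
  assumes state: "ram_invariant i1 (fs @ [(m, A, c, N, r)]) mem" "mem 14 = j" "bounded_by B mem"
    and ranges: "\<bar>m\<bar> \<le> P" "\<bar>A\<bar> \<le> P" "\<bar>c\<bar> \<le> P" "\<bar>N\<bar> \<le> P" "\<bar>r\<bar> \<le> P" "int (length fs) \<le> P"
    and B: "(P + 11)\<^sup>2 \<le> B"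
  shows "runs_to prog B 20 66 (\<lambda>mem'. folded_state i1 fs m A c N r mem' \<and> mem' 14 = j) (53, mem)"
proof -
  note B' = square_bound_expand[OF B]
  have bounds: "fits B (100 + 5 * int (length fs))" "fits B (101 + 5 * int (length fs))"
    "fits B (102 + 5 * int (length fs))" "fits B (103 + 5 * int (length fs))"
    "fits B (104 + 5 * int (length fs))" "fits B m" "fits B A" "fits B c" "fits B N" "fits B r"
    using ranges B' unfolding fits_def by (simp_all only: abs_le_iff) linarith+
  show ?thesis
    using state unfolding folded_state_def loop_state_def ram_invariant_def
    by (simp add: bounded_by_upd bounds)
qed

lemma lift_block:
  assumes state: "folded_state i1 fs m A c N r mem" "mem 14 = j" "bounded_by B mem"
    and ranges: "0 < A" "A \<le> m" "0 \<le> c" "c < m" "0 \<le> N" "m \<le> P" "N \<le> P"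
      "0 \<le> j" "j + 1 \<le> (A * N + c) div m"
    and B: "(P + 11)\<^sup>2 \<le> B"
  shows "runs_to prog B 20 53
    (\<lambda>mem'. ram_invariant i1 fs mem' \<and> mem' 14 = unfold_index r N (lift_minimizer m A c j))
    (66, mem)"
proof -
  note B' = square_bound_expand[OF B]
  define y where "y = wrap_point m A c (j + 1)"
  have y: "0 \<le> y" "y \<le> N"
    using wrap_point_range[of A c m "j + 1" N] ranges unfolding y_def by auto
  have "(j + 1) * m \<le> (A * N + c) div m * m" using ranges by simp
  moreover have "(A * N + c) div m * m \<le> A * N + c" using ranges by (simp add: pos_div_mult_le)
  moreover have "(A * N + c) div m \<le> A * N + c"
    using zdiv_mono2[of "A * N + c" 1 m] ranges by simp
  moreover have "0 \<le> (j + 1) * m" "0 \<le> A * N" "A * N \<le> P * P"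
    "0 \<le> A * y" "A * y \<le> P * P" "0 \<le> (A * y + c) mod m" "(A * y + c) mod m < m"
    using ranges y by (auto intro: mult_mono)
  ultimately have bounds: "fits B (j + 1)" "fits B ((j + 1) * m)" "fits B ((j + 1) * m - c)"
    "fits B ((j + 1) * m - c + A)" "fits B ((j + 1) * m - c + A - 1)" "fits B y" "fits B (A * y)"
    "fits B (A * y + c)" "fits B ((A * y + c) mod m)" "fits B (N - y)" "fits B 0" "fits B N"
    using ranges y B' unfolding fits_def by (simp_all only: abs_le_iff) linarith+
  show ?thesis
    using state
    unfolding folded_state_def loop_state_def ram_invariant_def unfold_index_def lift_minimizer_def
      Let_def hmod_def
    \<comment> \<open>The two undecided branches are split by hand; left to \<open>if_split\<close>, the simplifier
      takes minutes here.\<close>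
    by (cases "(A * y + c) mod m < c"; cases "0 < r";
        simp add: wrap_point_def[symmetric] y_def[symmetric] bounded_by_upd bounds split del: if_split)
qed

lemma bounded_by_init:
  assumes "0 \<le> B" "\<And>x. x \<in> set xs \<Longrightarrow> \<bar>x\<bar> \<le> B"
  shows "bounded_by B (snd (init xs))"
  using assms unfolding bounded_by_def init_def by auto

lemma init_cells:
  assumes "init [x0, x1, x2, x3, x4] = (pc, mem)"
  shows "pc = 0" "mem 0 = x0" "mem 1 = x1" "mem 2 = x2" "mem 3 = x3" "mem 4 = x4"
  using assms unfolding init_def by auto

lemma zero_slope_block:
  assumes "init [p, 0, b, i1, i2] = (pc, mem)" "bounded_by B mem" "fits B i1" "fits B 100"
  shows "runs_to prog B 10 7 (\<lambda>mem'. mem' 0 = i1) (pc, mem)"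
proof -
  have "fits B 0" "fits B 1" "fits B 5" using assms unfolding fits_def by auto
  then show ?thesis using assms init_cells[OF assms(1)] by (simp add: bounded_by_upd)
qed

lemma init_block:
  assumes "init [p, a, b, i1, i2] = (pc, mem)" "bounded_by B mem"
    and ranges: "0 < a" "a < p" "0 \<le> b" "b < p" "0 < i1" "i1 < i2"
    and B: "(p + i2)\<^sup>2 \<le> B" "100 \<le> B"
  shows "runs_to prog B 20 17 (loop_state i1 [] p a ((a * i1 + b) mod p) (min (i2 - i1) (p - 1)))
    (pc, mem)"
proof -
  have "a * i1 \<le> p * i2" "0 \<le> a * i1" using ranges by (auto intro: mult_mono)
  moreover have "p \<le> p * p" "i2 \<le> p * i2" "0 \<le> i2 * i2" using ranges by auto
  moreover have "(p + i2)\<^sup>2 = p * p + 2 * (p * i2) + i2 * i2"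
    by (simp add: power2_eq_square algebra_simps)
  moreover have "0 \<le> (a * i1 + b) mod p" "(a * i1 + b) mod p < p" using ranges by auto
  ultimately have bounds: "fits B (a * i1)"
    "fits B (a * i1 + b)" "fits B ((a * i1 + b) mod p)" "fits B (i2 - i1)" "fits B (p - 1)"
    "fits B p" "fits B a"
    using ranges B unfolding fits_def by (simp_all only: abs_le_iff) linarith+
  moreover have "fits B 0" "fits B 1" "fits B 5" "fits B 100" using B unfolding fits_def by auto
  moreover have "min (i2 - i1) (p - 1) = (if i2 - i1 < p - 1 then i2 - i1 else p - 1)" by simp
  ultimately show ?thesis
    using assms(1,2) init_cells[OF assms(1)] ranges
    unfolding loop_state_def ram_invariant_def
    by (cases "i2 - i1 < p - 1"; simp add: bounded_by_upd split del: if_split)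
qed

lemma exit_block:
  assumes "ram_invariant i1 [] mem" "mem 14 = y" "bounded_by B mem" "fits B (y + i1)"
  shows "runs_to prog B 5 55 (\<lambda>mem'. mem' 0 = y + i1) (53, mem)"
  using assms unfolding ram_invariant_def by (simp add: bounded_by_upd)

definition answer_state ::
  "int \<Rightarrow> int \<Rightarrow> frame list \<Rightarrow> (int \<Rightarrow> bool) \<Rightarrow> config \<Rightarrow> bool"
where
  "answer_state B i1 fs Y c \<longleftrightarrow>
     fst c = 53 \<and> bounded_by B (snd c) \<and> ram_invariant i1 fs (snd c) \<and> Y (snd c 14)"

lemma loop_step_no_wrap:
  assumes state: "loop_state i1 fs m A c N mem" "bounded_by B mem"
    and fold: "fold_slope m A c N = (A', c', r)" and no_wrap: "(A' * N + c') div m = 0"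
    and ranges: "0 \<le> A" "A < m" "0 \<le> c" "c < m" "0 \<le> N" "m \<le> P" "N \<le> P"
    and B: "(P + 11)\<^sup>2 \<le> B"
  shows "reach prog B 20 (17, mem) (answer_state B i1 fs (is_minimizer m A c N))"
proof -
  note folded = fold_slope_bounds[OF fold ranges(1-4)]
  have "reach prog B (10 + 10) (17, mem)
    (\<lambda>s. fst s = 53 \<and> bounded_by B (snd s) \<and>
      ram_invariant i1 fs (snd s) \<and> snd s 14 = unfold_index r N 0)"
    by (rule reach_seq[OF reach_if_runs_to[OF _ fold_block[OF state fold ranges B]]])
      (use state folded ranges in \<open>auto intro!: reach_if_runs_to base_block[OF _ _ no_wrap _ _ _ _ _ _ B]\<close>)
  moreover have "is_minimizer m A c N (unfold_index r N 0)"
    using is_minimizer_fold_slope[OF fold is_minimizer_no_wrap] folded ranges no_wrap by simp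
  ultimately show ?thesis
    by (auto simp: answer_state_def elim!: reach_mono)
qed

lemma return_step:
  assumes returned: "answer_state B i1 (fs @ [(m, A', c', N, r)])
      (is_minimizer A' ((- m) mod A') ((c' - m) mod A') ((A' * N + c') div m - 1)) st"
    and fold: "fold_slope m A c N = (A', c', r)" and wraps: "1 \<le> (A' * N + c') div m"
    and ranges: "0 \<le> A" "A < m" "0 \<le> c" "c < m" "0 \<le> N" "m \<le> P" "N \<le> P"
      "int (length fs) \<le> P"
    and B: "(P + 11)\<^sup>2 \<le> B"
  shows "reach prog B (20 + 20) st (answer_state B i1 fs (is_minimizer m A c N))"
proof -
  note folded = fold_slope_bounds[OF fold ranges(1-4)]
  have "0 < A'" using slope_nonzero_if_wraps[OF _ _ wraps] folded by simp
  obtain mem where st: "st = (53, mem)" "bounded_by B mem"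
    "ram_invariant i1 (fs @ [(m, A', c', N, r)]) mem"
    and j: "is_minimizer A' ((- m) mod A') ((c' - m) mod A') ((A' * N + c') div m - 1) (mem 14)"
    using returned unfolding answer_state_def by (cases st) auto
  have popped: "runs_to prog B 20 66
    (\<lambda>mem'. folded_state i1 fs m A' c' N r mem' \<and> mem' 14 = mem 14) (53, mem)"
    using st folded ranges by (intro pop_block[OF _ _ _ _ _ _ _ _ _ B]) auto
  have "0 \<le> mem 14" "mem 14 + 1 \<le> (A' * N + c') div m" using j unfolding is_minimizer_def by auto
  have "reach prog B (20 + 20) (53, mem) (answer_state B i1 fs (is_minimizer m A c N))"
  proof (rule reach_seq[OF reach_if_runs_to[OF st(2) popped]])
    fix mem' assume mem': "bounded_by B mem'" "folded_state i1 fs m A' c' N r mem' \<and> mem' 14 = mem 14"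
    then have "reach prog B 20 (66, mem') (\<lambda>s. fst s = 53 \<and> bounded_by B (snd s) \<and>
      ram_invariant i1 fs (snd s) \<and> snd s 14 = unfold_index r N (lift_minimizer m A' c' (mem 14)))"
      using folded ranges \<open>0 < A'\<close> \<open>0 \<le> mem 14\<close> \<open>mem 14 + 1 \<le> _\<close>
      by (intro reach_if_runs_to lift_block[OF _ _ _ _ _ _ _ _ _ _ _ _ B]) auto
    moreover have "is_minimizer m A c N (unfold_index r N (lift_minimizer m A' c' (mem 14)))"
      using j folded ranges \<open>0 < A'\<close>
      by (intro is_minimizer_fold_slope[OF fold] is_minimizer_lift) auto
    ultimately show "reach prog B 20 (66, mem') (answer_state B i1 fs (is_minimizer m A c N))"
      by (auto simp: answer_state_def elim!: reach_mono)
  qed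
  then show ?thesis using st(1) by simp
qed

lemma loop_step_wrap:
  assumes state: "loop_state i1 fs m A c N mem" "bounded_by B mem"
    and fold: "fold_slope m A c N = (A', c', r)" and wraps: "1 \<le> (A' * N + c') div m"
    and ranges: "0 \<le> A" "A < m" "0 \<le> c" "c < m" "0 \<le> N" "m \<le> P" "N \<le> P"
      "int (length fs) \<le> P"
    and B: "(P + 11)\<^sup>2 \<le> B"
    and inner: "\<And>mem'. loop_state i1 (fs @ [(m, A', c', N, r)])
        A' ((- m) mod A') ((c' - m) mod A') ((A' * N + c') div m - 1) mem' \<Longrightarrow>
      bounded_by B mem' \<Longrightarrow>
      reach prog B k (17, mem') (answer_state B i1 (fs @ [(m, A', c', N, r)])
        (is_minimizer A' ((- m) mod A') ((c' - m) mod A') ((A' * N + c') div m - 1)))"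
  shows "reach prog B (10 + (30 + (k + (20 + 20)))) (17, mem)
    (answer_state B i1 fs (is_minimizer m A c N))"
proof -
  note folded = fold_slope_bounds[OF fold ranges(1-4)]
  have pushed: "reach prog B (30 + (k + (20 + 20))) (26, mem')
    (answer_state B i1 fs (is_minimizer m A c N))"
    if "bounded_by B mem'" "folded_state i1 fs m A' c' N r mem'" for mem'
  proof (rule reach_seq[OF reach_if_runs_to[OF _ push_block[OF that(2) _ wraps]]])
    fix mem'' assume "bounded_by B mem''" "loop_state i1 (fs @ [(m, A', c', N, r)])
      A' ((- m) mod A') ((c' - m) mod A') ((A' * N + c') div m - 1) mem''"
    then show "reach prog B (k + (20 + 20)) (17, mem'') (answer_state B i1 fs (is_minimizer m A c N))"
      using return_step[OF _ fold wraps ranges B] by (intro reach_trans[OF inner]) auto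
  qed (use that folded ranges B in auto)
  show ?thesis
    by (rule reach_seq[OF reach_if_runs_to[OF state(2) fold_block[OF state fold ranges(1-7) B]]])
      (rule pushed)
qed

lemma loop_correct:
  assumes B: "(P + 11)\<^sup>2 \<le> B"
  shows "loop_state i1 fs m A c N mem \<Longrightarrow> bounded_by B mem \<Longrightarrow>
    0 \<le> A \<Longrightarrow> A < m \<Longrightarrow> 0 \<le> c \<Longrightarrow> c < m \<Longrightarrow> 0 \<le> N \<Longrightarrow> m \<le> P \<Longrightarrow>
    int (length fs) + N \<le> P \<Longrightarrow> N + 1 \<le> 2 ^ d \<Longrightarrow>
    reach prog B (80 * (d + 1)) (17, mem) (answer_state B i1 fs (is_minimizer m A c N))"
proof (induction d arbitrary: fs m A c N mem)
  case 0
  obtain A' c' r where fold: "fold_slope m A c N = (A', c', r)" by (metis prod_cases3)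
  note folded = fold_slope_bounds[OF fold "0.prems"(3-6)]
  have "(A' * N + c') div m = 0" using "0.prems" folded by (simp add: div_pos_pos_trivial)
  with fold "0.prems" have "reach prog B 20 (17, mem) (answer_state B i1 fs (is_minimizer m A c N))"
    by (intro loop_step_no_wrap[OF _ _ _ _ _ _ _ _ _ _ _ B]) auto
  then show ?case by (rule reach_mono) auto
next
  case (Suc d)
  obtain A' c' r where fold: "fold_slope m A c N = (A', c', r)" by (metis prod_cases3)
  note folded = fold_slope_bounds[OF fold Suc.prems(3-6)]
  show ?case
  proof (cases "(A' * N + c') div m = 0")
    case True
    with fold Suc.prems have "reach prog B 20 (17, mem) (answer_state B i1 fs (is_minimizer m A c N))"
      by (intro loop_step_no_wrap[OF _ _ _ _ _ _ _ _ _ _ _ B]) auto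
    then show ?thesis by (rule reach_mono) auto
  next
    case False
    define K where "K = (A' * N + c') div m"
    have "0 \<le> K" unfolding K_def using folded Suc.prems by (simp add: pos_imp_zdiv_nonneg_iff)
    with False have "1 \<le> K" unfolding K_def by simp
    moreover have "2 * K \<le> N + 1"
      unfolding K_def using folded Suc.prems by (intro wrap_count_halves) auto
    ultimately have "K \<le> N" "K - 1 + 1 \<le> 2 ^ d" using Suc.prems(10) by auto
    have "0 < A'"
      using slope_nonzero_if_wraps[of c' m A' N] folded \<open>1 \<le> K\<close> unfolding K_def by simp
    have "reach prog B (10 + (30 + (80 * (d + 1) + (20 + 20)))) (17, mem)
      (answer_state B i1 fs (is_minimizer m A c N))"
    proof (rule loop_step_wrap[OF Suc.prems(1,2) fold _ Suc.prems(3-8) _ _ B])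
      fix mem' assume "loop_state i1 (fs @ [(m, A', c', N, r)])
        A' ((- m) mod A') ((c' - m) mod A') ((A' * N + c') div m - 1) mem'" "bounded_by B mem'"
      then show "reach prog B (80 * (d + 1)) (17, mem') (answer_state B i1 (fs @ [(m, A', c', N, r)])
        (is_minimizer A' ((- m) mod A') ((c' - m) mod A') ((A' * N + c') div m - 1)))"
        using Suc.prems folded \<open>0 < A'\<close> \<open>1 \<le> K\<close> \<open>K \<le> N\<close> \<open>K - 1 + 1 \<le> 2 ^ d\<close>
        unfolding K_def by (intro Suc.IH) auto
    qed (use Suc.prems \<open>1 \<le> K\<close> in \<open>auto simp: K_def\<close>)
    then show ?thesis by (rule reach_mono) auto
  qed
qed

lemma exists_pow2_above:
  fixes x :: real
  assumes "1 \<le> x"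
  shows "\<exists>d::nat. x \<le> 2 ^ d \<and> real d \<le> log 2 x + 1"
proof -
  define d where "d = nat \<lceil>log 2 x\<rceil>"
  have d: "real d = of_int \<lceil>log 2 x\<rceil>" unfolding d_def using assms by simp
  have "x = 2 powr (log 2 x)" using assms by simp
  also have "\<dots> \<le> 2 powr (real d)" using d by (intro powr_mono) auto
  also have "\<dots> = 2 ^ d" by (simp add: powr_realpow)
  finally show ?thesis using d ceiling_correct[of "log 2 x"] by (intro exI[of _ d]) linarith
qed

lemma fourth_power_bounds:
  fixes P :: int
  assumes "4 \<le> P"
  shows "(P + 11)\<^sup>2 \<le> P ^ 4" "P\<^sup>2 \<le> P ^ 4" "100 \<le> P ^ 4" "P \<le> P ^ 4"
proof -
  have "4 * P \<le> P * P" using assms by (intro mult_right_mono) auto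
  then have sq: "P + 11 \<le> P * P" "1 \<le> P * P" "16 \<le> P * P" using assms by linarith+
  have "P ^ 4 = (P * P) * (P * P)" "P\<^sup>2 = P * P" "(P + 11)\<^sup>2 = (P + 11) * (P + 11)"
    by (simp_all add: power2_eq_square power4_eq_xxxx)
  moreover have "(P + 11) * (P + 11) \<le> (P * P) * (P * P)" using sq assms by (intro mult_mono) auto
  moreover have "1 * (P * P) \<le> (P * P) * (P * P)" using sq by (intro mult_right_mono) auto
  moreover have "16 * 16 \<le> (P * P) * (P * P)" using sq by (intro mult_mono) auto
  ultimately show "(P + 11)\<^sup>2 \<le> P ^ 4" "P\<^sup>2 \<le> P ^ 4" "100 \<le> P ^ 4" "P \<le> P ^ 4"
    using sq by linarith+
qed

lemma halted_prog: "halted prog (7, mem)" "halted prog (55, mem)"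
  by (simp_all add: halted_def)

lemma zero_slope_correct:
  assumes "i1 \<le> i2" "init [p, 0, b, i1, i2] = (pc, mem)" "bounded_by B mem"
    and "fits B i1" "fits B 100"
  shows "reach prog B 10 (pc, mem)
    (\<lambda>s. halted prog s \<and> snd s 0 = argmin_on (hmod p 0 b) {i1..i2})"
proof -
  have "reach prog B 10 (pc, mem) (\<lambda>s. fst s = 7 \<and> bounded_by B (snd s) \<and> snd s 0 = i1)"
    using assms by (intro reach_if_runs_to zero_slope_block)
  then show ?thesis
    by (auto simp: halted_prog argmin_on_hmod_zero_slope[OF assms(1)] elim!: reach_mono)
qed

lemma positive_slope_correct:
  assumes "prime p" "0 < a" "a < p" "0 \<le> b" "b < p" "0 < i1" "i1 < i2"
    and init: "init [p, a, b, i1, i2] = (pc, mem)" "bounded_by B mem"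
    and B: "(p + i2 + 11)\<^sup>2 \<le> B" "(p + i2)\<^sup>2 \<le> B" "100 \<le> B" "p + i2 \<le> B"
    and d: "min (i2 - i1) (p - 1) + 1 \<le> 2 ^ d"
  shows "reach prog B (20 + (80 * (d + 1) + 5)) (pc, mem)
    (\<lambda>s. halted prog s \<and> snd s 0 = argmin_on (hmod p a b) {i1..i2})"
proof -
  define N0 where "N0 = min (i2 - i1) (p - 1)"
  define c0 where "c0 = (a * i1 + b) mod p"
  have N0: "0 \<le> N0" "N0 \<le> i2 - i1" "N0 \<le> p - 1" unfolding N0_def using assms by auto
  have loaded: "reach prog B 20 (pc, mem)
    (\<lambda>s. fst s = 17 \<and> bounded_by B (snd s) \<and> loop_state i1 [] p a c0 N0 (snd s))"
    using assms unfolding N0_def c0_def by (intro reach_if_runs_to init_block) auto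
  show ?thesis
  proof (rule reach_seq[OF loaded])
    fix mem assume "bounded_by B mem" "loop_state i1 [] p a c0 N0 mem"
    then have "reach prog B (80 * (d + 1)) (17, mem) (answer_state B i1 [] (is_minimizer p a c0 N0))"
      using B(1) assms N0 d unfolding c0_def N0_def[symmetric]
      by (intro loop_correct[of "p + i2"]) auto
    then show "reach prog B (80 * (d + 1) + 5) (17, mem)
      (\<lambda>s. halted prog s \<and> snd s 0 = argmin_on (hmod p a b) {i1..i2})"
    proof (rule reach_trans)
      fix s assume "answer_state B i1 [] (is_minimizer p a c0 N0) s"
      then obtain mem' where s: "s = (53, mem')" "bounded_by B mem'" "ram_invariant i1 [] mem'"
        "is_minimizer p a c0 N0 (mem' 14)"
        unfolding answer_state_def by (cases s) auto
      then have "fits B (mem' 14 + i1)"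
        using B N0 assms unfolding is_minimizer_def fits_def by (auto simp: abs_le_iff)
      then have "reach prog B 5 (53, mem') (\<lambda>s. fst s = 55 \<and> bounded_by B (snd s) \<and>
        snd s 0 = mem' 14 + i1)"
        using s by (intro reach_if_runs_to exit_block) auto
      moreover have "argmin_on (hmod p a b) {i1..i2} = mem' 14 + i1"
        using argmin_on_hmod[OF assms(1-3), of i1 i2 b "mem' 14"] s(4) assms
        unfolding N0_def c0_def by (simp add: add.commute)
      ultimately show "reach prog B 5 s
        (\<lambda>s. halted prog s \<and> snd s 0 = argmin_on (hmod p a b) {i1..i2})"
        unfolding s(1) by (auto simp: halted_prog elim!: reach_mono)
    qed
  qed
qed

lemma prog_computes_argmin:
  assumes "prime p" "0 \<le> a" "a < p" "0 \<le> b" "b < p" "0 < i1" "i1 < i2"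
  shows "\<exists>k. real k \<le> 265 * log 2 (real_of_int (i2 - i1 + 1)) \<and>
    reach prog ((p + i2) ^ 4) k (init [p, a, b, i1, i2])
      (\<lambda>s. halted prog s \<and> snd s 0 = argmin_on (hmod p a b) {i1..i2})"
proof -
  define B where "B = (p + i2) ^ 4"
  define L where "L = log 2 (real_of_int (i2 - i1 + 1))"
  have "2 \<le> p" using assms(1) by (simp add: prime_ge_2_int)
  then have B: "(p + i2 + 11)\<^sup>2 \<le> B" "(p + i2)\<^sup>2 \<le> B" "100 \<le> B" "p + i2 \<le> B"
    unfolding B_def using fourth_power_bounds[of "p + i2"] assms by auto
  have "1 \<le> L" unfolding L_def using assms log_mono[of 2 2 "real_of_int (i2 - i1 + 1)"] by simp
  obtain pc mem where init: "init [p, a, b, i1, i2] = (pc, mem)" by fastforce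
  have "bounded_by B (snd (init [p, a, b, i1, i2]))" using B assms by (intro bounded_by_init) auto
  then have "bounded_by B mem" using init by simp
  show ?thesis
  proof (cases "a = 0")
    case True
    then have "reach prog B 10 (pc, mem)
      (\<lambda>s. halted prog s \<and> snd s 0 = argmin_on (hmod p a b) {i1..i2})"
      using init B assms \<open>bounded_by B mem\<close> unfolding True
      by (intro zero_slope_correct) (auto simp: fits_def)
    moreover have "real (10::nat) \<le> 265 * L" using \<open>1 \<le> L\<close> by simp
    ultimately show ?thesis unfolding init L_def[symmetric] B_def[symmetric] by blast
  next
    case False
    have N0: "0 \<le> min (i2 - i1) (p - 1)" "min (i2 - i1) (p - 1) \<le> i2 - i1" using assms by auto
    obtain d where d: "real_of_int (min (i2 - i1) (p - 1) + 1) \<le> 2 ^ d"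
      "real d \<le> log 2 (real_of_int (min (i2 - i1) (p - 1) + 1)) + 1"
      using exists_pow2_above[of "real_of_int (min (i2 - i1) (p - 1) + 1)"] N0 by auto
    have "min (i2 - i1) (p - 1) + 1 \<le> 2 ^ d"
      using d(1) by (metis of_int_le_iff of_int_numeral of_int_power)
    then have "reach prog B (20 + (80 * (d + 1) + 5)) (pc, mem)
      (\<lambda>s. halted prog s \<and> snd s 0 = argmin_on (hmod p a b) {i1..i2})"
      using init B assms False \<open>bounded_by B mem\<close> by (intro positive_slope_correct) auto
    moreover have "log 2 (real_of_int (min (i2 - i1) (p - 1) + 1)) \<le> L"
      unfolding L_def using N0 by (intro log_mono) auto
    then have "real (20 + (80 * (d + 1) + 5)) \<le> 265 * L" using d(2) \<open>1 \<le> L\<close> by simp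
    ultimately show ?thesis unfolding init L_def[symmetric] B_def[symmetric] by blast
  qed
qed

theorem lemma3:
  shows "\<exists>(P :: instr list) (C :: real) (K :: nat).
    \<forall>(p :: int) (a :: int) (b :: int) (i1 :: int) (i2 :: int).
      prime p \<and> 0 \<le> a \<and> a < p \<and> 0 \<le> b \<and> b < p \<and> 0 < i1 \<and> i1 < i2 \<longrightarrow>
      (\<exists>n :: nat.
         real n \<le> C * log 2 (real_of_int (i2 - i1 + 1)) \<and>
         halted P (run P n (init [p, a, b, i1, i2])) \<and>
         snd (run P n (init [p, a, b, i1, i2])) 0 = argmin_on (hmod p a b) {i1..i2} \<and>
         (\<forall>t \<le> n. \<forall>x. \<bar>snd (run P t (init [p, a, b, i1, i2])) x\<bar> \<le> (p + i2) ^ K))"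
proof (rule exI[of _ prog], rule exI[of _ "265 :: real"], rule exI[of _ "4 :: nat"], intro allI impI)
  fix p a b i1 i2 :: int
  assume "prime p \<and> 0 \<le> a \<and> a < p \<and> 0 \<le> b \<and> b < p \<and> 0 < i1 \<and> i1 < i2"
  then obtain k where "real k \<le> 265 * log 2 (real_of_int (i2 - i1 + 1))"
    "reach prog ((p + i2) ^ 4) k (init [p, a, b, i1, i2])
      (\<lambda>s. halted prog s \<and> snd s 0 = argmin_on (hmod p a b) {i1..i2})"
    using prog_computes_argmin by blast
  then show "\<exists>n. real n \<le> 265 * log 2 (real_of_int (i2 - i1 + 1)) \<and>
      halted prog (run prog n (init [p, a, b, i1, i2])) \<and>
      snd (run prog n (init [p, a, b, i1, i2])) 0 = argmin_on (hmod p a b) {i1..i2} \<and>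
      (\<forall>t \<le> n. \<forall>x. \<bar>snd (run prog t (init [p, a, b, i1, i2])) x\<bar> \<le> (p + i2) ^ 4)"
    unfolding reach_def bounded_by_def by (meson of_nat_le_iff order_trans)
qed

end
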